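(* Let $m$ be a positive integer. For all positive integers $k,n$ with $k\ge m$, all indices $i_1,\ldots,i_m,j_1,\ldots,j_m,s_1,\ldots,s_m,t_1,\ldots,t_m\in\{1,\ldots,k\}$, and all $\iota_1,\ldots,\iota_m,\eta_1,\ldots,\eta_m\in\{1,\ldots,n\}$, $$\left|\int_{\mathcal{U}_k^n} f_{i_1j_1}(u_{\iota_1})\cdots f_{i_mj_m}(u_{\iota_m})\,\overline{f_{s_1t_1}(u_{\eta_1})}\cdots\overline{f_{s_mt_m}(u_{\eta_m})}\,d\mu_k^n(\vec u)\right| \le \frac{4^{m^2}}{k^m}.$$
   Context: $\mathcal{U}_k$ is the group of unitary $k\times k$ complex matrices, $\mu_k$ its normalized Haar measure, $\mathcal{U}_k^n$ the direct product of $n$ copies of $\mathcal{U}_k$ with product measure $\mu_k^n$, and $\vec u=(u_1,\ldots,u_n)\in\mathcal{U}_k^n$. For a $k\times k$ matrix $a$, $f_{ij}(a)$ denotes the $(i,j)$-entry of $a$. *)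

theory Defs
  imports "HOL-Analysis.Analysis"
begin

definition cadj :: "complex^'k^'k \<Rightarrow> complex^'k^'k" where
  "cadj A = (\<chi> i j. cnj (A $ j $ i))"

definition unitary_group :: "(complex^'k^'k) set" where
  "unitary_group = {U. U ** cadj U = mat 1}"

definition is_haar :: "(complex^'k^'k) measure \<Rightarrow> bool" where
  "is_haar M \<longleftrightarrow>
     sets M = sets (restrict_space borel (unitary_group :: (complex^'k^'k) set)) \<and>
     emeasure M (space M) = 1 \<and>
     (\<forall>g\<in>unitary_group. \<forall>A\<in>sets M.
        emeasure M ((\<lambda>u. g ** u) -` A \<inter> space M) = emeasure M A \<and>
        emeasure M ((\<lambda>u. u ** g) -` A \<inter> space M) = emeasure M A)"

end

theory Submission
  imports Defs "HOL-Probability.Probability"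
begin

text \<open>The integrand is a product of \<open>2m\<close> entries, so by AM-GM its modulus is at most the mean of
  their \<open>2m\<close>-th powers, and it suffices to show \<open>E |u_ab|^(2m) \<le> 4^(m^2) / k^m\<close> for a single
  Haar unitary \<open>u\<close>. Right invariance of the Haar measure under the swap (for \<open>m = 0\<close>) or the
  45-degree rotation of columns \<open>b \<noteq> l\<close> gives
  \<open>E |u_ab|^(2m+2) \<le> c_m E (|u_ab|^(2m) |u_al|^2)\<close> with \<open>c_m \<le> 4^(2m+1)\<close>. Summing over \<open>l\<close>
  and using that row \<open>a\<close> of \<open>u\<close> is a unit vector yields \<open>k E |u_ab|^(2m+2) \<le> c_m E |u_ab|^(2m)\<close>,
  and induction on \<open>m\<close> gives the moment bound.\<close>

lemma cadj_matrix_mul: "cadj (A ** B) = cadj B ** (cadj A :: complex^'k^'k)"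
  by (simp add: cadj_def matrix_matrix_mult_def vec_eq_iff mult.commute)

lemma unitary_group_mul:
  assumes "U \<in> unitary_group" "V \<in> unitary_group"
  shows "U ** V \<in> (unitary_group :: (complex^'k^'k) set)"
proof -
  have "(U ** V) ** cadj (U ** V) = U ** (V ** cadj V) ** cadj U"
    by (simp add: cadj_matrix_mul matrix_mul_assoc)
  also have "\<dots> = mat 1" using assms by (simp add: unitary_group_def)
  finally show ?thesis by (simp add: unitary_group_def)
qed

lemma unitary_row_norm:
  assumes "U \<in> (unitary_group :: (complex^'k^'k) set)"
  shows "(\<Sum>l\<in>UNIV. cmod (U $ a $ l) ^ 2) = 1"
proof -
  have "(U ** cadj U) $ a $ a = 1" using assms by (simp add: unitary_group_def mat_def)
  hence "complex_of_real (\<Sum>l\<in>UNIV. cmod (U $ a $ l) ^ 2) = 1"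
    by (simp add: matrix_matrix_mult_def cadj_def flip: complex_norm_square)
  thus ?thesis by (metis of_real_eq_1_iff)
qed

lemma unitary_entry_le_1:
  assumes "U \<in> (unitary_group :: (complex^'k^'k) set)"
  shows "cmod (U $ a $ b) \<le> 1"
proof -
  have "cmod (U $ a $ b) ^ 2 \<le> (\<Sum>l\<in>UNIV. cmod (U $ a $ l) ^ 2)"
    by (rule member_le_sum) auto
  thus ?thesis using unitary_row_norm[OF assms] by (simp add: abs_square_le_1)
qed

text \<open>The real \<open>2\<times>2\<close> block \<open>[[\<alpha>, \<beta>], [\<gamma>, \<delta>]]\<close> in rows and columns \<open>b, l\<close>, identity elsewhere.\<close>
definition plane_matrix :: "'k \<Rightarrow> 'k \<Rightarrow> real \<Rightarrow> real \<Rightarrow> real \<Rightarrow> real \<Rightarrow> complex^'k^'k" where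
  "plane_matrix b l \<alpha> \<beta> \<gamma> \<delta> = (\<chi> p q.
     if q = b then (if p = b then of_real \<alpha> else if p = l then of_real \<gamma> else 0)
     else if q = l then (if p = b then of_real \<beta> else if p = l then of_real \<delta> else 0)
     else if p = q then 1 else 0)"

lemma matrix_mul_plane_matrix:
  fixes u :: "complex^'k^'k"
  assumes "b \<noteq> l"
  shows "(u ** plane_matrix b l \<alpha> \<beta> \<gamma> \<delta>) $ a $ b = of_real \<alpha> * u $ a $ b + of_real \<gamma> * u $ a $ l"
    and "(u ** plane_matrix b l \<alpha> \<beta> \<gamma> \<delta>) $ a $ l = of_real \<beta> * u $ a $ b + of_real \<delta> * u $ a $ l"
  using assms
  by (simp_all add: matrix_matrix_mult_def plane_matrix_def if_distrib[of "\<lambda>x. y * x" for y]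
      sum.If_cases Int_insert_right mult.commute cong: if_cong)

lemma plane_matrix_unitary:
  assumes "b \<noteq> l" "\<alpha>\<^sup>2 + \<beta>\<^sup>2 = 1" "\<gamma>\<^sup>2 + \<delta>\<^sup>2 = 1" "\<alpha> * \<gamma> + \<beta> * \<delta> = 0"
  shows "plane_matrix b l \<alpha> \<beta> \<gamma> \<delta> \<in> (unitary_group :: (complex^'k^'k) set)"
proof -
  let ?g = "plane_matrix b l \<alpha> \<beta> \<gamma> \<delta> :: complex^'k^'k"
  have "(?g ** cadj ?g) $ p $ r = mat 1 $ p $ r" for p r
  proof -
    have UNIV_split: "(UNIV::'k set) = insert b (insert l (UNIV - {b, l}))" by auto
    have "(?g ** cadj ?g) $ p $ r = ?g$p$b * cnj (?g$r$b) + ?g$p$l * cnj (?g$r$l)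
        + (\<Sum>q\<in>UNIV - {b,l}. ?g$p$q * cnj (?g$r$q))"
      using assms(1)
      by (simp add: matrix_matrix_mult_def cadj_def, subst UNIV_split, simp add: add.assoc)
    also have "(\<Sum>q\<in>UNIV - {b,l}. ?g$p$q * cnj (?g$r$q)) = (if p = r \<and> p \<notin> {b,l} then 1 else 0)"
      by (auto simp: plane_matrix_def if_distrib[of "\<lambda>x. x * y" for y] cong: if_cong)
    finally show ?thesis
      using assms(1) arg_cong[OF assms(2), of complex_of_real] arg_cong[OF assms(3), of complex_of_real]
        arg_cong[OF assms(4), of complex_of_real]
      by (auto simp: plane_matrix_def mat_def power2_eq_square mult.commute)
  qed
  thus ?thesis by (simp add: unitary_group_def vec_eq_iff)
qed

lemma space_haar: "is_haar \<mu> \<Longrightarrow> space \<mu> = unitary_group"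
  unfolding is_haar_def
  using sets_eq_imp_space_eq[of \<mu> "restrict_space borel unitary_group"]
  by (simp add: space_restrict_space)

lemma prob_space_haar: "is_haar \<mu> \<Longrightarrow> prob_space \<mu>"
  unfolding is_haar_def by (intro prob_spaceI) auto

lemma haar_measurable_continuous:
  fixes f :: "complex^'k^'k \<Rightarrow> 'b::topological_space"
  assumes "is_haar \<mu>" "continuous_on UNIV f"
  shows "f \<in> borel_measurable \<mu>"
proof -
  have "f \<in> measurable (restrict_space borel (unitary_group :: (complex^'k^'k) set)) borel"
    by (intro measurable_restrict_space1 borel_measurable_continuous_onI assms(2))
  thus ?thesis using assms(1) measurable_cong_sets unfolding is_haar_def by blast
qed

lemma integrable_haar_bounded_continuous:
  fixes f :: "complex^'k^'k \<Rightarrow> real"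
  assumes "is_haar \<mu>" "continuous_on UNIV f" "\<And>u. u \<in> unitary_group \<Longrightarrow> \<bar>f u\<bar> \<le> B"
  shows "integrable \<mu> f"
proof -
  interpret prob_space \<mu> using prob_space_haar[OF assms(1)] .
  show ?thesis
    by (rule integrable_const_bound[where B=B])
       (use assms space_haar[OF assms(1)] haar_measurable_continuous in auto)
qed

lemma haar_measurable_right_mul:
  fixes \<mu> :: "(complex^'k^'k) measure"
  assumes "is_haar \<mu>" "g \<in> unitary_group"
  shows "(\<lambda>u. u ** g) \<in> measurable \<mu> \<mu>"
proof -
  have sets: "sets \<mu> = sets (restrict_space borel (unitary_group :: (complex^'k^'k) set))"
    using assms(1) unfolding is_haar_def by simp
  have "continuous_on UNIV (\<lambda>u::complex^'k^'k. u ** g)"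
    unfolding matrix_matrix_mult_def by (intro continuous_intros)
  hence "(\<lambda>u. u ** g) \<in> measurable (restrict_space borel (unitary_group :: (complex^'k^'k) set))
           (restrict_space borel unitary_group)"
    by (intro measurable_restrict_space3 borel_measurable_continuous_onI)
       (use assms(2) unitary_group_mul in auto)
  thus ?thesis using measurable_cong_sets[OF sets sets] by blast
qed

lemma distr_haar_right_mul:
  fixes \<mu> :: "(complex^'k^'k) measure"
  assumes "is_haar \<mu>" "g \<in> unitary_group"
  shows "distr \<mu> \<mu> (\<lambda>u. u ** g) = \<mu>"
proof (rule measure_eqI)
  fix A assume "A \<in> sets (distr \<mu> \<mu> (\<lambda>u. u ** g))"
  thus "emeasure (distr \<mu> \<mu> (\<lambda>u. u ** g)) A = emeasure \<mu> A"
    using assms haar_measurable_right_mul[OF assms] unfolding is_haar_def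
    by (simp add: emeasure_distr)
qed simp

lemma integral_haar_right_mul:
  fixes \<mu> :: "(complex^'k^'k) measure"
    and f :: "complex^'k^'k \<Rightarrow> 'b::{banach, second_countable_topology}"
  assumes "is_haar \<mu>" "g \<in> unitary_group" "f \<in> borel_measurable \<mu>"
  shows "(\<integral>u. f (u ** g) \<partial>\<mu>) = (\<integral>u. f u \<partial>\<mu>)"
  using integral_distr[OF haar_measurable_right_mul[OF assms(1,2)] assms(3)]
  by (simp add: distr_haar_right_mul[OF assms(1,2)])

section \<open>Moments of a single entry\<close>

lemma norm_power_le_mixed_plus_rotated:
  fixes x y :: complex
  shows "cmod x ^ (2 * Suc m) \<le> 9 * (cmod x ^ (2 * m) * cmod y ^ 2)
     + (9/2) ^ Suc m * ((cmod (x + y) ^ 2 / 2) ^ m * (cmod (x - y) ^ 2 / 2))"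
    (is "_ \<le> ?mixed + ?rotated")
proof -
  have "0 \<le> ?mixed" "0 \<le> ?rotated" by simp_all
  consider "cmod x ^ 2 \<le> 9 * cmod y ^ 2" | "3 * cmod y < cmod x"
    using power_mono[of "cmod x" "3 * cmod y" 2] by (force simp: power_mult_distrib)
  thus ?thesis
  proof cases
    case 1
    have "cmod x ^ (2 * Suc m) = cmod x ^ (2 * m) * cmod x ^ 2"
      by (simp add: power_add[symmetric])
    also have "\<dots> \<le> ?mixed"
      using mult_left_mono[OF 1, of "cmod x ^ (2 * m)"] by (simp add: algebra_simps)
    finally show ?thesis using \<open>0 \<le> ?rotated\<close> by linarith
  next
    case 2
    hence "2/3 * cmod x \<le> cmod (x + y)" "2/3 * cmod x \<le> cmod (x - y)"
      using norm_diff_ineq[of x y] norm_triangle_ineq2[of x y] by linarith+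
    hence "(2/3 * cmod x) ^ 2 \<le> cmod (x + y) ^ 2" "(2/3 * cmod x) ^ 2 \<le> cmod (x - y) ^ 2"
      by (auto intro!: power_mono)
    hence "2/9 * cmod x ^ 2 \<le> cmod (x + y) ^ 2 / 2" "2/9 * cmod x ^ 2 \<le> cmod (x - y) ^ 2 / 2"
      by (simp_all add: power_mult_distrib power2_eq_square)
    hence "(2/9 * cmod x ^ 2) ^ m * (2/9 * cmod x ^ 2) \<le>
        (cmod (x + y) ^ 2 / 2) ^ m * (cmod (x - y) ^ 2 / 2)"
      by (intro mult_mono power_mono) auto
    hence "(9/2) ^ Suc m * ((2/9 * cmod x ^ 2) ^ m * (2/9 * cmod x ^ 2)) \<le> ?rotated"
      by (intro mult_left_mono) auto
    moreover have "(9/2) ^ Suc m * ((2/9 * cmod x ^ 2) ^ m * (2/9 * cmod x ^ 2)) = cmod x ^ (2 * Suc m)"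
      by (simp only: power_Suc2 [symmetric] power_mult_distrib [symmetric] power_mult) simp
    ultimately show ?thesis using \<open>0 \<le> ?mixed\<close> by linarith
  qed
qed

context
  fixes \<mu> :: "(complex^'k^'k) measure"
  assumes haar: "is_haar \<mu>"
begin

lemma integrable_haar_entry_powers:
  "integrable \<mu> (\<lambda>u. cmod (u $ a $ b) ^ p * cmod (u $ a' $ b') ^ q)"
proof (rule integrable_haar_bounded_continuous[OF haar _, where B=1])
  fix u :: "complex^'k^'k" assume "u \<in> unitary_group"
  thus "\<bar>cmod (u $ a $ b) ^ p * cmod (u $ a' $ b') ^ q\<bar> \<le> 1"
    using unitary_entry_le_1[of u a b] unitary_entry_le_1[of u a' b']
    by (simp add: power_le_one mult_le_one)
qed (intro continuous_intros)

lemma haar_entry_moment_swap: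
  assumes "b \<noteq> l"
  shows "(\<integral>u. cmod (u $ a $ l) ^ p \<partial>\<mu>) = (\<integral>u. cmod (u $ a $ b) ^ p \<partial>\<mu>)"
proof -
  let ?P = "plane_matrix b l 0 1 1 0 :: complex^'k^'k"
  have "?P \<in> unitary_group" by (rule plane_matrix_unitary[OF assms]) auto
  moreover have "continuous_on UNIV (\<lambda>u::complex^'k^'k. cmod (u $ a $ l) ^ p)"
    by (intro continuous_intros)
  ultimately have "(\<integral>u. cmod ((u ** ?P) $ a $ l) ^ p \<partial>\<mu>) = (\<integral>u. cmod (u $ a $ l) ^ p \<partial>\<mu>)"
    using integral_haar_right_mul[OF haar] haar_measurable_continuous[OF haar] by blast
  thus ?thesis using matrix_mul_plane_matrix[OF assms] by simp
qed

lemma haar_entry_moment_le_mixed: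
  assumes "b \<noteq> l"
  shows "(\<integral>u. cmod (u $ a $ b) ^ (2 * Suc m) \<partial>\<mu>)
    \<le> (9 + (9/2) ^ Suc m) * (\<integral>u. cmod (u $ a $ b) ^ (2 * m) * cmod (u $ a $ l) ^ 2 \<partial>\<mu>)"
proof -
  define f where "f = (\<lambda>u::complex^'k^'k. cmod (u $ a $ b) ^ (2 * m) * cmod (u $ a $ l) ^ 2)"
  define s :: real where "s = 1 / sqrt 2"
  let ?R = "plane_matrix b l s s s (-s) :: complex^'k^'k"
  have s2: "s\<^sup>2 = 1/2" unfolding s_def by (simp add: power_divide)
  have R: "?R \<in> unitary_group" by (rule plane_matrix_unitary[OF assms]) (use s2 in auto)
  have rotated: "f (u ** ?R) = (cmod (u$a$b + u$a$l) ^ 2 / 2) ^ m * (cmod (u$a$b - u$a$l) ^ 2 / 2)" for u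
    using matrix_mul_plane_matrix[OF assms, where u=u and a=a and \<alpha>=s and \<beta>=s and \<gamma>=s and \<delta>="-s"]
    by (simp add: f_def norm_mult power_mult_distrib s2 power_mult flip: ring_distribs)
  have f_meas: "f \<in> borel_measurable \<mu>"
    unfolding f_def by (intro haar_measurable_continuous[OF haar] continuous_intros)
  have f_int: "integrable \<mu> f"
    unfolding f_def by (rule integrable_haar_entry_powers)
  hence fR_int: "integrable \<mu> (\<lambda>u. f (u ** ?R))"
    using integrable_distr_eq[OF haar_measurable_right_mul[OF haar R] f_meas]
    by (simp add: distr_haar_right_mul[OF haar R])
  have "(\<integral>u. cmod (u $ a $ b) ^ (2 * Suc m) \<partial>\<mu>) \<le> (\<integral>u. 9 * f u + (9/2) ^ Suc m * f (u ** ?R) \<partial>\<mu>)"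
  proof (rule integral_mono')
    show "integrable \<mu> (\<lambda>u. 9 * f u + (9/2) ^ Suc m * f (u ** ?R))"
      using f_int fR_int by simp
    fix u assume "u \<in> space \<mu>"
    show "cmod (u $ a $ b) ^ (2 * Suc m) \<le> 9 * f u + (9/2) ^ Suc m * f (u ** ?R)"
      unfolding rotated unfolding f_def by (rule norm_power_le_mixed_plus_rotated)
    show "0 \<le> 9 * f u + (9/2) ^ Suc m * f (u ** ?R)"
      unfolding rotated unfolding f_def by simp
  qed
  also have "\<dots> = 9 * integral\<^sup>L \<mu> f + (9/2) ^ Suc m * (\<integral>u. f (u ** ?R) \<partial>\<mu>)"
    using f_int fR_int by simp
  also have "(\<integral>u. f (u ** ?R) \<partial>\<mu>) = integral\<^sup>L \<mu> f"
    by (rule integral_haar_right_mul[OF haar R f_meas])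
  finally show ?thesis by (simp add: f_def algebra_simps)
qed

lemma haar_entry_moment_recursion:
  assumes c: "c \<ge> 1"
    and mixed: "\<And>l. l \<noteq> b \<Longrightarrow> (\<integral>u. cmod (u $ a $ b) ^ (2 * Suc m) \<partial>\<mu>)
                  \<le> c * (\<integral>u. cmod (u $ a $ b) ^ (2 * m) * cmod (u $ a $ l) ^ 2 \<partial>\<mu>)"
  shows "real CARD('k) * (\<integral>u. cmod (u $ a $ b) ^ (2 * Suc m) \<partial>\<mu>)
    \<le> c * (\<integral>u. cmod (u $ a $ b) ^ (2 * m) \<partial>\<mu>)"
proof -
  define h where "h = (\<lambda>l u::complex^'k^'k. cmod (u $ a $ b) ^ (2 * m) * cmod (u $ a $ l) ^ 2)"
  define E where "E = (\<integral>u. cmod (u $ a $ b) ^ (2 * Suc m) \<partial>\<mu>)"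
  have "(\<integral>u. cmod (u $ a $ b) ^ (2 * m) \<partial>\<mu>) = (\<integral>u. (\<Sum>l\<in>UNIV. h l u) \<partial>\<mu>)"
    using unitary_row_norm space_haar[OF haar]
    by (intro Bochner_Integration.integral_cong) (auto simp: h_def simp flip: sum_distrib_left)
  also have "\<dots> = (\<Sum>l\<in>UNIV. integral\<^sup>L \<mu> (h l))"
    using integrable_haar_entry_powers by (simp add: h_def)
  also have "\<dots> = E + (\<Sum>l\<in>UNIV - {b}. integral\<^sup>L \<mu> (h l))"
    by (subst sum.remove[of UNIV b]) (simp_all add: h_def E_def power2_eq_square mult_ac)
  finally have row: "(\<integral>u. cmod (u $ a $ b) ^ (2 * m) \<partial>\<mu>) = E + (\<Sum>l\<in>UNIV - {b}. integral\<^sup>L \<mu> (h l))" .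
  have "(real CARD('k) - 1) * E = (\<Sum>l\<in>UNIV - {b}. E)"
    by (simp add: card_Diff_singleton of_nat_diff)
  also have "\<dots> \<le> c * (\<Sum>l\<in>UNIV - {b}. integral\<^sup>L \<mu> (h l))"
    unfolding sum_distrib_left using mixed by (intro sum_mono) (auto simp: E_def h_def)
  finally have "(real CARD('k) - 1) * E \<le> c * (\<Sum>l\<in>UNIV - {b}. integral\<^sup>L \<mu> (h l))" .
  moreover have "E \<le> c * E"
    using mult_right_mono[OF c, of E] by (simp add: E_def)
  ultimately show ?thesis unfolding row E_def[symmetric] by (simp add: algebra_simps)
qed

lemma haar_entry_moment_le:
  "(\<integral>u. cmod (u $ a $ b) ^ (2 * m) \<partial>\<mu>) \<le> 4 ^ (m\<^sup>2) / real CARD('k) ^ m"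
proof (induction m)
  case 0
  interpret prob_space \<mu> using prob_space_haar[OF haar] .
  show ?case by (simp add: prob_space)
next
  case (Suc m)
  \<comment> \<open>For \<open>m = 0\<close> the rotation constant \<open>27/2\<close> would be too large, but the column swap gives \<open>1\<close>.\<close>
  define c :: real where "c = (if m = 0 then 1 else 9 + (9/2) ^ Suc m)"
  have c_le: "c \<le> 4 ^ (2 * m + 1)"
  proof (cases m)
    case (Suc m')
    have "(9/2::real) ^ m' \<le> 16 ^ m'" by (intro power_mono) auto
    thus ?thesis
      by (simp add: c_def Suc power_mult) (use one_le_power[of "16::real" m'] in linarith)
  qed (simp add: c_def)
  have "real CARD('k) * (\<integral>u. cmod (u $ a $ b) ^ (2 * Suc m) \<partial>\<mu>)
      \<le> c * (\<integral>u. cmod (u $ a $ b) ^ (2 * m) \<partial>\<mu>)"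
  proof (rule haar_entry_moment_recursion)
    fix l assume "l \<noteq> b"
    thus "(\<integral>u. cmod (u $ a $ b) ^ (2 * Suc m) \<partial>\<mu>)
        \<le> c * (\<integral>u. cmod (u $ a $ b) ^ (2 * m) * cmod (u $ a $ l) ^ 2 \<partial>\<mu>)"
      using haar_entry_moment_le_mixed[of b l a m] haar_entry_moment_swap[of b l a 2]
      by (auto simp: c_def power2_eq_square)
  qed (simp add: c_def)
  also have "\<dots> \<le> 4 ^ (2 * m + 1) * (4 ^ (m\<^sup>2) / real CARD('k) ^ m)"
    using Suc.IH c_le by (intro mult_mono) (auto simp: c_def)
  also have "\<dots> = real CARD('k) * (4 ^ ((Suc m)\<^sup>2) / real CARD('k) ^ Suc m)"
    by (simp add: power2_eq_square power_add power_mult field_simps)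
  finally show ?case by (simp add: field_simps)
qed

end

section \<open>Products of factors with bounded moments\<close>

lemma prod_le_mean_power_card:
  fixes w :: "'a \<Rightarrow> real"
  assumes "finite S" "S \<noteq> {}" "\<And>i. i \<in> S \<Longrightarrow> 0 \<le> w i"
  shows "(\<Prod>i\<in>S. w i) \<le> (\<Sum>i\<in>S. w i ^ card S) / card S"
proof -
  have N: "card S > 0" using assms by (simp add: card_gt_0_iff)
  have "(\<Prod>i\<in>S. w i) = ((\<Prod>i\<in>S. w i) ^ card S) powr (1 / card S)"
    using N assms(3) by (simp add: prod_nonneg powr_realpow' [symmetric] powr_powr)
  also have "\<dots> = (\<Prod>i\<in>S. w i ^ card S) powr (1 / card S)"
    by (simp add: prod_power_distrib)
  also have "\<dots> \<le> (\<Sum>i\<in>S. w i ^ card S / card S)"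
    using assms by (intro arith_geom_mean) auto
  finally show ?thesis by (simp add: sum_divide_distrib)
qed

lemma norm_integral_prod_le:
  fixes f :: "'i \<Rightarrow> 'a \<Rightarrow> 'b::{real_normed_field, banach, second_countable_topology}"
  assumes "finite S" "S \<noteq> {}"
    and integrable: "\<And>i. i \<in> S \<Longrightarrow> integrable M (\<lambda>\<omega>. norm (f i \<omega>) ^ card S)"
    and bound: "\<And>i. i \<in> S \<Longrightarrow> (\<integral>\<omega>. norm (f i \<omega>) ^ card S \<partial>M) \<le> B"
  shows "norm (\<integral>\<omega>. (\<Prod>i\<in>S. f i \<omega>) \<partial>M) \<le> B"
proof -
  have N: "card S > 0" using assms by (simp add: card_gt_0_iff)
  have "norm (\<integral>\<omega>. (\<Prod>i\<in>S. f i \<omega>) \<partial>M) \<le> (\<integral>\<omega>. norm (\<Prod>i\<in>S. f i \<omega>) \<partial>M)"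
    by (rule integral_norm_bound)
  also have "\<dots> \<le> (\<integral>\<omega>. (\<Sum>i\<in>S. norm (f i \<omega>) ^ card S) / card S \<partial>M)"
  proof (rule integral_mono')
    show "integrable M (\<lambda>\<omega>. (\<Sum>i\<in>S. norm (f i \<omega>) ^ card S) / card S)"
      using integrable by simp
    fix \<omega>
    show "norm (\<Prod>i\<in>S. f i \<omega>) \<le> (\<Sum>i\<in>S. norm (f i \<omega>) ^ card S) / card S"
      using prod_le_mean_power_card[OF assms(1,2), of "\<lambda>i. norm (f i \<omega>)"] by (simp add: prod_norm)
    show "0 \<le> (\<Sum>i\<in>S. norm (f i \<omega>) ^ card S) / card S"
      by (simp add: sum_nonneg)
  qed
  also have "\<dots> = (\<Sum>i\<in>S. (\<integral>\<omega>. norm (f i \<omega>) ^ card S \<partial>M)) / card S"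
    using integrable by simp
  also have "\<dots> \<le> (\<Sum>i\<in>S. B) / card S"
    using bound by (intro divide_right_mono sum_mono) auto
  also have "\<dots> = B" using N by simp
  finally show ?thesis .
qed

lemma
  fixes M :: "'i \<Rightarrow> 'a measure" and f :: "'a \<Rightarrow> 'b::{banach, second_countable_topology}"
  assumes "\<And>i. i \<in> I \<Longrightarrow> prob_space (M i)" "i \<in> I" "f \<in> borel_measurable (M i)"
  shows integrable_PiM_component_iff: "integrable (PiM I M) (\<lambda>\<omega>. f (\<omega> i)) \<longleftrightarrow> integrable (M i) f"
    and integral_PiM_component: "(\<integral>\<omega>. f (\<omega> i) \<partial>PiM I M) = integral\<^sup>L (M i) f"
proof -
  have meas: "(\<lambda>\<omega>. \<omega> i) \<in> measurable (PiM I M) (M i)"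
    using assms(2) by simp
  have distr: "distr (PiM I M) (M i) (\<lambda>\<omega>. \<omega> i) = M i"
    by (rule distr_PiM_component[OF assms(1,2)])
  show "integrable (PiM I M) (\<lambda>\<omega>. f (\<omega> i)) \<longleftrightarrow> integrable (M i) f"
    using integrable_distr_eq[OF meas assms(3)] unfolding distr by simp
  show "(\<integral>\<omega>. f (\<omega> i) \<partial>PiM I M) = integral\<^sup>L (M i) f"
    using integral_distr[OF meas assms(3)] unfolding distr by simp
qed

lemma
  fixes \<mu> :: "(complex^'k^'k) measure"
  assumes "is_haar \<mu>" "p \<in> I"
  shows integrable_PiM_haar_entry_power: "integrable (PiM I (\<lambda>_. \<mu>)) (\<lambda>u. cmod (u p $ a $ b) ^ q)"
    and integral_PiM_haar_entry_power:
      "(\<integral>u. cmod (u p $ a $ b) ^ q \<partial>PiM I (\<lambda>_. \<mu>)) = (\<integral>u. cmod (u $ a $ b) ^ q \<partial>\<mu>)"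
proof -
  have meas: "(\<lambda>u::complex^'k^'k. cmod (u $ a $ b) ^ q) \<in> borel_measurable \<mu>"
    by (intro haar_measurable_continuous[OF assms(1)] continuous_intros)
  have "integrable \<mu> (\<lambda>u. cmod (u $ a $ b) ^ q)"
    using integrable_haar_entry_powers[OF assms(1), of a b q a b 0] by simp
  thus "integrable (PiM I (\<lambda>_. \<mu>)) (\<lambda>u. cmod (u p $ a $ b) ^ q)"
    using integrable_PiM_component_iff[OF prob_space_haar[OF assms(1)] assms(2) meas] by simp
  show "(\<integral>u. cmod (u p $ a $ b) ^ q \<partial>PiM I (\<lambda>_. \<mu>)) = (\<integral>u. cmod (u $ a $ b) ^ q \<partial>\<mu>)"
    by (rule integral_PiM_component[OF prob_space_haar[OF assms(1)] assms(2) meas])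
qed

theorem lemma5:
  fixes \<mu> :: "(complex^'k^'k) measure"
    and m n :: nat
    and i j s t :: "nat \<Rightarrow> 'k"
    and \<iota> \<eta> :: "nat \<Rightarrow> nat"
  assumes "m > 0" and "n > 0" and "CARD('k) \<ge> m"
    and "is_haar \<mu>"
    and "\<forall>l<m. \<iota> l < n" and "\<forall>l<m. \<eta> l < n"
  shows "cmod (integral\<^sup>L (PiM {..<n} (\<lambda>_. \<mu>))
            (\<lambda>u. (\<Prod>l<m. u (\<iota> l) $ i l $ j l) * (\<Prod>l<m. cnj (u (\<eta> l) $ s l $ t l))))
         \<le> 4 ^ (m^2) / real (CARD('k)) ^ m"
proof -
  let ?P = "PiM {..<n} (\<lambda>_. \<mu>)" and ?B = "4 ^ (m^2) / real (CARD('k)) ^ m"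
  define f where "f = case_sum (\<lambda>l u. u (\<iota> l) $ i l $ j l) (\<lambda>l u. cnj (u (\<eta> l) $ s l $ t l))"
  have "cmod (\<integral>u. (\<Prod>x\<in>{..<m} <+> {..<m}. f x u) \<partial>?P) \<le> ?B"
  proof (rule norm_integral_prod_le)
    show "finite ({..<m} <+> {..<m})" "{..<m} <+> {..<m} \<noteq> {}"
      using assms(1) by auto
    fix x assume "x \<in> {..<m} <+> {..<m}"
    then obtain p a b where "p < n" "\<And>u. norm (f x u) = cmod (u p $ a $ b)"
      using assms(5,6) by (auto simp: f_def)
    moreover have "card ({..<m} <+> {..<m}) = 2 * m"
      by (simp add: card_Plus)
    ultimately show "integrable ?P (\<lambda>u. norm (f x u) ^ card ({..<m} <+> {..<m}))"
      and "(\<integral>u. norm (f x u) ^ card ({..<m} <+> {..<m}) \<partial>?P) \<le> ?B"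
      using integrable_PiM_haar_entry_power[OF assms(4), of p "{..<n}" a b "2 * m"]
        integral_PiM_haar_entry_power[OF assms(4), of p "{..<n}" a b "2 * m"]
        haar_entry_moment_le[OF assms(4), of a b m] by simp_all
  qed
  thus ?thesis by (simp add: f_def prod.Plus comp_def)
qed

end
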